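(* Let $0<\alpha<\beta$ and let $A:\mathcal{C}_{\alpha}(\mathbb{R})\to\mathcal{C}_{\beta}(\mathbb{R})$ be a bounded linear operator. For $r>0$ let $B_r=\{f\in\mathcal{C}_{\alpha}(\mathbb{R}):\ |f|_{\alpha}<r\}$. Suppose that for every $X>0$ (and every $r>0$) the family of functions $\{(Af)|_{[-X,X]}:\ f\in B_r\}$ is uniformly equicontinuous. Then $A$, regarded as an operator $\mathcal{C}_{\alpha}(\mathbb{R})\to\mathcal{C}_{\alpha}(\mathbb{R})$, is compact.
   Context: For $\gamma\ge 0$, $\mathcal{C}_{\gamma}(\mathbb{R})$ denotes the Banach space of continuous functions $f:\mathbb{R}\to\mathbb{C}$ with $|f|_{\gamma}=\sup\{(1+|x|)^{\gamma}|f(x)|:\ x\in\mathbb{R}\}<\infty$, normed by $|\cdot|_{\gamma}$. *)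

theory Defs
  imports "HOL-Analysis.Analysis"
begin

definition Cw :: "real \<Rightarrow> (real \<Rightarrow> complex) set" where
  "Cw \<gamma> = {f. continuous_on UNIV f \<and>
                 bdd_above (range (\<lambda>x. (1 + \<bar>x\<bar>) powr \<gamma> * cmod (f x)))}"

definition wnorm :: "real \<Rightarrow> (real \<Rightarrow> complex) \<Rightarrow> real" where
  "wnorm \<gamma> f = (SUP x. (1 + \<bar>x\<bar>) powr \<gamma> * cmod (f x))"

definition bounded_linear_op ::
  "real \<Rightarrow> real \<Rightarrow> ((real \<Rightarrow> complex) \<Rightarrow> (real \<Rightarrow> complex)) \<Rightarrow> bool" where
  "bounded_linear_op \<alpha> \<beta> A \<longleftrightarrow>
     (\<forall>f\<in>Cw \<alpha>. A f \<in> Cw \<beta>) \<and>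
     (\<forall>f\<in>Cw \<alpha>. \<forall>g\<in>Cw \<alpha>. A (\<lambda>x. f x + g x) = (\<lambda>x. A f x + A g x)) \<and>
     (\<forall>f\<in>Cw \<alpha>. \<forall>c::complex. A (\<lambda>x. c * f x) = (\<lambda>x. c * A f x)) \<and>
     (\<exists>K. \<forall>f\<in>Cw \<alpha>. wnorm \<beta> (A f) \<le> K * wnorm \<alpha> f)"

definition compact_op :: "real \<Rightarrow> ((real \<Rightarrow> complex) \<Rightarrow> (real \<Rightarrow> complex)) \<Rightarrow> bool" where
  "compact_op \<alpha> A \<longleftrightarrow>
     (\<forall>fs :: nat \<Rightarrow> real \<Rightarrow> complex.
        (\<forall>n. fs n \<in> Cw \<alpha>) \<and> bdd_above (range (\<lambda>n. wnorm \<alpha> (fs n))) \<longrightarrow>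
        (\<exists>r g. strict_mono r \<and> g \<in> Cw \<alpha> \<and>
               (\<lambda>n. wnorm \<alpha> (\<lambda>x. A (fs (r n)) x - g x)) \<longlonglongrightarrow> 0))"

end

(*
  For a bounded sequence f_n in C_alpha, the images h_n = A f_n are bounded in C_beta, say
  (1 + |x|)^beta |h_n x| <= C, and by hypothesis equicontinuous on every compact interval.
  Arzela-Ascoli on the balls [-i, i] combined with a diagonal argument yields a subsequence
  converging uniformly on compacts to a continuous g, which inherits the C_beta bound.
  Since alpha < beta, the weighted difference (1 + |x|)^alpha |h_n x - g x| is at most
  2 C (1 + |x|)^(alpha - beta), which is small outside a large interval [-X, X]; inside it,
  the convergence is uniform. Hence h_n -> g in C_alpha.
*)
theory Submission
  imports Defs "HOL-Complex_Analysis.Great_Picard"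
begin

lemma wnorm_upper:
  assumes "bdd_above (range (\<lambda>x. (1 + \<bar>x\<bar>) powr \<gamma> * cmod (f x)))"
  shows "(1 + \<bar>x\<bar>) powr \<gamma> * cmod (f x) \<le> wnorm \<gamma> f"
  unfolding wnorm_def using assms by (rule cSUP_upper[rotated]) simp

lemma wnorm_least:
  assumes "\<And>x. (1 + \<bar>x\<bar>) powr \<gamma> * cmod (f x) \<le> B"
  shows "wnorm \<gamma> f \<le> B"
  unfolding wnorm_def using assms by (rule cSUP_least[rotated]) simp

lemma wnorm_nonneg:
  assumes "\<And>x. (1 + \<bar>x\<bar>) powr \<gamma> * cmod (f x) \<le> B"
  shows "0 \<le> wnorm \<gamma> f"
proof -
  have "0 \<le> (1 + \<bar>0\<bar>) powr \<gamma> * cmod (f 0)"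
    by simp
  also have "\<dots> \<le> wnorm \<gamma> f"
    using assms by (intro wnorm_upper bdd_aboveI2)
  finally show ?thesis .
qed

lemma CwI:
  assumes "continuous_on UNIV f" and "\<And>x. (1 + \<bar>x\<bar>) powr \<gamma> * cmod (f x) \<le> B"
  shows "f \<in> Cw \<gamma>"
proof -
  have "bdd_above (range (\<lambda>x. (1 + \<bar>x\<bar>) powr \<gamma> * cmod (f x)))"
    using assms(2) by (intro bdd_aboveI2)
  with assms(1) show ?thesis
    by (simp add: Cw_def)
qed

lemma Cw_antimono:
  assumes "\<alpha> \<le> \<beta>"
  shows "Cw \<beta> \<subseteq> Cw \<alpha>"
proof
  fix f
  assume f: "f \<in> Cw \<beta>"
  have "(1 + \<bar>x\<bar>) powr \<alpha> * cmod (f x) \<le> wnorm \<beta> f" for x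
  proof -
    have "(1 + \<bar>x\<bar>) powr \<alpha> * cmod (f x) \<le> (1 + \<bar>x\<bar>) powr \<beta> * cmod (f x)"
      using assms by (intro mult_right_mono powr_mono) auto
    also have "\<dots> \<le> wnorm \<beta> f"
      using f by (intro wnorm_upper) (simp add: Cw_def)
    finally show ?thesis .
  qed
  with f show "f \<in> Cw \<alpha>"
    by (intro CwI) (simp_all add: Cw_def)
qed

lemma bounded_linear_op_weighted_bound:
  assumes "bounded_linear_op \<alpha> \<beta> A"
  obtains K where "0 \<le> K"
    "\<And>f x. f \<in> Cw \<alpha> \<Longrightarrow> (1 + \<bar>x\<bar>) powr \<beta> * cmod (A f x) \<le> K * wnorm \<alpha> f"
proof -
  obtain K where A_Cw: "\<And>f. f \<in> Cw \<alpha> \<Longrightarrow> A f \<in> Cw \<beta>"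
    and K: "\<And>f. f \<in> Cw \<alpha> \<Longrightarrow> wnorm \<beta> (A f) \<le> K * wnorm \<alpha> f"
    using assms unfolding bounded_linear_op_def by blast
  have "(1 + \<bar>x\<bar>) powr \<beta> * cmod (A f x) \<le> \<bar>K\<bar> * wnorm \<alpha> f" if f: "f \<in> Cw \<alpha>" for f x
  proof -
    have "0 \<le> wnorm \<alpha> f"
      using f by (intro wnorm_nonneg) (auto simp: Cw_def intro: wnorm_upper)
    have "(1 + \<bar>x\<bar>) powr \<beta> * cmod (A f x) \<le> wnorm \<beta> (A f)"
      using A_Cw[OF f] by (intro wnorm_upper) (simp add: Cw_def)
    also have "\<dots> \<le> K * wnorm \<alpha> f"
      using K[OF f] .
    also have "\<dots> \<le> \<bar>K\<bar> * wnorm \<alpha> f"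
      using \<open>0 \<le> wnorm \<alpha> f\<close> by (intro mult_right_mono) auto
    finally show ?thesis .
  qed
  then show thesis
    using that[of "\<bar>K\<bar>"] by simp
qed

lemma weight_powr_shift_le:
  fixes x c C :: real
  assumes "(1 + \<bar>x\<bar>) powr \<beta> * c \<le> C"
  shows "(1 + \<bar>x\<bar>) powr \<alpha> * c \<le> C * (1 + \<bar>x\<bar>) powr (\<alpha> - \<beta>)"
proof -
  have "(1 + \<bar>x\<bar>) powr \<alpha> * c = (1 + \<bar>x\<bar>) powr (\<alpha> - \<beta>) * ((1 + \<bar>x\<bar>) powr \<beta> * c)"
    by (simp add: powr_add[symmetric] mult.assoc[symmetric])
  also have "\<dots> \<le> (1 + \<bar>x\<bar>) powr (\<alpha> - \<beta>) * C"
    by (rule mult_left_mono[OF assms]) simp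
  finally show ?thesis
    by (simp add: mult.commute)
qed

lemma weight_two_region_le:
  fixes z :: complex and x X :: real
  assumes "0 \<le> \<alpha>" "\<alpha> \<le> \<beta>" "0 \<le> X"
    and decay: "(1 + \<bar>x\<bar>) powr \<beta> * cmod z \<le> C"
    and near: "\<bar>x\<bar> \<le> X \<Longrightarrow> cmod z \<le> \<eta>"
  shows "(1 + \<bar>x\<bar>) powr \<alpha> * cmod z \<le> max ((1 + X) powr \<alpha> * \<eta>) (C * (1 + X) powr (\<alpha> - \<beta>))"
proof (cases "\<bar>x\<bar> \<le> X")
  case True
  then have "(1 + \<bar>x\<bar>) powr \<alpha> * cmod z \<le> (1 + X) powr \<alpha> * \<eta>"
    using near \<open>0 \<le> \<alpha>\<close> by (intro mult_mono powr_mono2) auto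
  then show ?thesis
    by (rule order_trans[OF _ max.cobounded1])
next
  case False
  have "0 \<le> C"
    using decay by (meson mult_nonneg_nonneg norm_ge_zero order_trans powr_ge_zero)
  have "(1 + \<bar>x\<bar>) powr \<alpha> * cmod z \<le> C * (1 + \<bar>x\<bar>) powr (\<alpha> - \<beta>)"
    using decay by (rule weight_powr_shift_le)
  also have "\<dots> \<le> C * (1 + X) powr (\<alpha> - \<beta>)"
    using False \<open>\<alpha> \<le> \<beta>\<close> \<open>0 \<le> X\<close> \<open>0 \<le> C\<close> by (intro mult_left_mono powr_mono2') auto
  finally show ?thesis
    by (rule order_trans[OF _ max.cobounded2])
qed

lemma wnorm_diff_tendsto_zero:
  fixes h :: "nat \<Rightarrow> real \<Rightarrow> complex"
  assumes "0 \<le> \<alpha>" "\<alpha> < \<beta>"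
    and h_decay: "\<And>n x. (1 + \<bar>x\<bar>) powr \<beta> * cmod (h n x) \<le> C"
    and g_decay: "\<And>x. (1 + \<bar>x\<bar>) powr \<beta> * cmod (g x) \<le> C"
    and uniform: "\<And>X. uniform_limit {-X..X} h g sequentially"
  shows "(\<lambda>n. wnorm \<alpha> (\<lambda>x. h n x - g x)) \<longlonglongrightarrow> 0"
  unfolding tendsto_iff dist_real_def
proof (intro allI impI)
  fix e :: real
  assume "0 < e"
  have diff_decay: "(1 + \<bar>x\<bar>) powr \<beta> * cmod (h n x - g x) \<le> 2 * C" for n x
  proof -
    have "(1 + \<bar>x\<bar>) powr \<beta> * cmod (h n x - g x) \<le> (1 + \<bar>x\<bar>) powr \<beta> * (cmod (h n x) + cmod (g x))"
      by (intro mult_left_mono norm_triangle_ineq4) simp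
    also have "\<dots> \<le> 2 * C"
      using h_decay[where n=n and x=x] g_decay[of x] by (simp add: distrib_left)
    finally show ?thesis .
  qed
  have "((\<lambda>X. 2 * C * (1 + X) powr (\<alpha> - \<beta>)) \<longlongrightarrow> 0) at_top"
    using \<open>\<alpha> < \<beta>\<close> by (intro tendsto_mult_right_zero tendsto_neg_powr
        filterlim_tendsto_add_at_top[OF tendsto_const filterlim_ident]) auto
  then have "\<forall>\<^sub>F X in at_top. 0 \<le> X \<and> 2 * C * (1 + X) powr (\<alpha> - \<beta>) < e"
    using \<open>0 < e\<close> by (intro eventually_conj eventually_ge_at_top order_tendstoD(2)) auto
  then obtain X where "0 \<le> X" and tail: "2 * C * (1 + X) powr (\<alpha> - \<beta>) < e"
    using eventually_happens'[OF trivial_limit_at_top_linorder] by blast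
  define \<eta> where "\<eta> = e / (2 * (1 + X) powr \<alpha>)"
  have "0 < \<eta>" and near: "(1 + X) powr \<alpha> * \<eta> < e"
    using \<open>0 < e\<close> \<open>0 \<le> X\<close> by (simp_all add: \<eta>_def)
  have "\<forall>\<^sub>F n in sequentially. \<forall>x\<in>{-X..X}. cmod (h n x - g x) < \<eta>"
    using uniform_limitD[OF uniform \<open>0 < \<eta>\<close>] by (simp add: dist_norm)
  then show "\<forall>\<^sub>F n in sequentially. \<bar>wnorm \<alpha> (\<lambda>x. h n x - g x) - 0\<bar> < e"
  proof eventually_elim
    case (elim n)
    let ?B = "max ((1 + X) powr \<alpha> * \<eta>) (2 * C * (1 + X) powr (\<alpha> - \<beta>))"
    have pointwise: "(1 + \<bar>x\<bar>) powr \<alpha> * cmod (h n x - g x) \<le> ?B" for x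
    proof (rule weight_two_region_le)
      assume "\<bar>x\<bar> \<le> X"
      then have "x \<in> {-X..X}"
        by (simp add: abs_le_iff)
      with elim show "cmod (h n x - g x) \<le> \<eta>"
        by (simp add: less_imp_le)
    qed (use \<open>0 \<le> \<alpha>\<close> \<open>\<alpha> < \<beta>\<close> \<open>0 \<le> X\<close> diff_decay in auto)
    with near tail show ?case
      using wnorm_nonneg[OF pointwise] wnorm_least[OF pointwise] by simp
  qed
qed

lemma equicontinuous_at_if_equicontinuous_on_intervals:
  fixes F :: "'i \<Rightarrow> real \<Rightarrow> 'b::real_normed_vector"
  assumes equicont: "\<And>X. X > 0 \<Longrightarrow> \<forall>e>0. \<exists>d>0. \<forall>f\<in>I. \<forall>x\<in>{-X..X}. \<forall>y\<in>{-X..X}.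
      \<bar>x - y\<bar> < d \<longrightarrow> norm (F f x - F f y) < e"
    and "0 < e"
  shows "\<exists>d>0. \<forall>f\<in>I. \<forall>y. \<bar>x - y\<bar> < d \<longrightarrow> norm (F f x - F f y) < e"
proof -
  obtain d where "d > 0" and d: "\<forall>f\<in>I. \<forall>u\<in>{-(\<bar>x\<bar> + 1)..\<bar>x\<bar> + 1}. \<forall>v\<in>{-(\<bar>x\<bar> + 1)..\<bar>x\<bar> + 1}.
      \<bar>u - v\<bar> < d \<longrightarrow> norm (F f u - F f v) < e"
    using equicont[of "\<bar>x\<bar> + 1"] \<open>0 < e\<close> by (metis abs_ge_zero add_nonneg_pos zero_less_one)
  have "norm (F f x - F f y) < e" if "f \<in> I" "\<bar>x - y\<bar> < min d 1" for f y
  proof -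
    have "x \<in> {-(\<bar>x\<bar> + 1)..\<bar>x\<bar> + 1}" "y \<in> {-(\<bar>x\<bar> + 1)..\<bar>x\<bar> + 1}"
      using that(2) by (auto simp: abs_le_iff abs_less_iff)
    then show ?thesis
      using d that by (meson min_less_iff_conj)
  qed
  with \<open>d > 0\<close> show ?thesis
    by (intro exI[of _ "min d 1"]) auto
qed

lemma Arzela_Ascoli_uniformly_convergent:
  fixes F :: "nat \<Rightarrow> 'a::euclidean_space \<Rightarrow> 'b::{real_normed_vector,heine_borel}"
  assumes "compact S" and "\<And>n x. x \<in> S \<Longrightarrow> norm (F n x) \<le> M"
    and "\<And>x e. \<lbrakk>x \<in> S; 0 < e\<rbrakk>
           \<Longrightarrow> \<exists>d>0. \<forall>n y. y \<in> S \<and> norm (x - y) < d \<longrightarrow> norm (F n x - F n y) < e"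
  obtains k where "strict_mono k" "uniformly_convergent_on S (F \<circ> k)"
proof -
  obtain g and k :: "nat \<Rightarrow> nat" where "continuous_on S g" "strict_mono k"
    and lim: "\<And>e. 0 < e \<Longrightarrow> \<exists>N. \<forall>n x. n \<ge> N \<and> x \<in> S \<longrightarrow> norm (F (k n) x - g x) < e"
    using Arzela_Ascoli[OF assms] by blast
  have "uniform_limit S (F \<circ> k) g sequentially"
    unfolding uniform_limit_sequentially_iff dist_norm comp_def using lim by metis
  with \<open>strict_mono k\<close> show thesis
    using that uniformly_convergentI by blast
qed

lemma uniformly_convergent_on_eventual_subseq:
  assumes conv: "uniformly_convergent_on S (f \<circ> k1)"
    and later: "\<And>j. N \<le> j \<Longrightarrow> \<exists>j'\<ge>j. k2 j = k1 j'"
  shows "uniformly_convergent_on S (f \<circ> k2)"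
proof -
  obtain \<sigma> where \<sigma>: "\<And>j. N \<le> j \<Longrightarrow> j \<le> \<sigma> j \<and> k2 j = k1 (\<sigma> j)"
    using later by metis
  have "filterlim \<sigma> sequentially sequentially"
    by (rule filterlim_at_top_mono[OF filterlim_ident])
      (use \<sigma> in \<open>auto simp: eventually_at_top_linorder\<close>)
  with conv have conv_\<sigma>: "uniformly_convergent_on S (\<lambda>j. (f \<circ> k1) (\<sigma> j))"
    by (rule uniformly_convergent_on_compose)
  have "\<forall>\<^sub>F j in sequentially. \<forall>x\<in>S. (f \<circ> k1) (\<sigma> j) x = (f \<circ> k2) j x"
    using \<sigma> by (auto simp: eventually_at_top_linorder intro!: exI[of _ N])
  from uniformly_convergent_cong[OF this refl] conv_\<sigma> show ?thesis
    by blast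
qed

lemma Arzela_Ascoli_locally_uniform:
  fixes h :: "nat \<Rightarrow> 'a::euclidean_space \<Rightarrow> 'b::{real_normed_vector,heine_borel}"
  assumes bounded: "\<And>K. compact K \<Longrightarrow> \<exists>B. \<forall>n. \<forall>x\<in>K. norm (h n x) \<le> B"
    and equicont: "\<And>x e. 0 < e \<Longrightarrow> \<exists>d>0. \<forall>n y. norm (x - y) < d \<longrightarrow> norm (h n x - h n y) < e"
  obtains k g where "strict_mono k" "continuous_on UNIV g"
    "\<And>K. compact K \<Longrightarrow> uniform_limit K (\<lambda>n. h (k n)) g sequentially"
proof -
  let ?P = "\<lambda>i s. uniformly_convergent_on (cball 0 (real i)) (h \<circ> s)"
  obtain k where "strict_mono k" and k: "\<And>i. ?P i (id \<circ> k)"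
  proof (rule subsequence_diagonalization_lemma[where P="?P" and r=id])
    fix i and r :: "nat \<Rightarrow> nat"
    obtain B where "\<And>n x. x \<in> cball 0 (real i) \<Longrightarrow> norm ((h \<circ> r) n x) \<le> B"
      using bounded[OF compact_cball, of 0 "real i"] by (metis comp_apply)
    moreover have "\<exists>d>0. \<forall>n y. y \<in> cball 0 (real i) \<and> norm (x - y) < d
        \<longrightarrow> norm ((h \<circ> r) n x - (h \<circ> r) n y) < e" if "0 < e" for x e
      using equicont[OF that, of x] by auto
    ultimately obtain k where "strict_mono k"
      "uniformly_convergent_on (cball 0 (real i)) (h \<circ> r \<circ> k)"
      by (rule Arzela_Ascoli_uniformly_convergent[OF compact_cball])
    then show "\<exists>k. strict_mono k \<and> ?P i (r \<circ> k)"
      by (auto simp: o_assoc)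
  next
    fix i N and r k1 k2 :: "nat \<Rightarrow> nat"
    assume "?P i (r \<circ> k1)" and "\<And>j. N \<le> j \<Longrightarrow> \<exists>j'\<ge>j. k2 j = k1 j'"
    then show "?P i (r \<circ> k2)"
      using uniformly_convergent_on_eventual_subseq[of _ "h \<circ> r" k1 N k2] by (simp add: o_assoc)
  next
    fix k :: "nat \<Rightarrow> nat"
    assume "strict_mono k" "\<And>i. ?P i (id \<circ> k)"
    then show thesis
      by (rule that)
  qed
  define g where "g = (\<lambda>x. lim (\<lambda>n. h (k n) x))"
  have ul: "uniform_limit K (\<lambda>n. h (k n)) g sequentially" if "compact K" for K
  proof -
    obtain R where "K \<subseteq> ball 0 R"
      using bounded_subset_ballD compact_imp_bounded \<open>compact K\<close> by blast
    moreover obtain i :: nat where "R \<le> real i"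
      using real_arch_simple by blast
    ultimately have "K \<subseteq> cball 0 (real i)"
      by (meson ball_subset_cball order_trans subset_cball)
    moreover have "uniform_limit (cball 0 (real i)) (\<lambda>n. h (k n)) g sequentially"
      using k by (simp add: uniformly_convergent_uniform_limit_iff g_def o_def)
    ultimately show ?thesis
      using uniform_limit_on_subset by blast
  qed
  have "continuous_on UNIV (h n)" for n
    unfolding continuous_on_iff dist_norm by (metis equicont norm_minus_commute)
  then have h_cont: "continuous_on S (h n)" for S n
    using continuous_on_subset by blast
  have "continuous_on (cball x 1) g" for x
    by (intro uniform_limit_theorem[OF _ ul[OF compact_cball]]) (simp_all add: h_cont)
  then have "isCont g x" for x
    using continuous_on_interior[of "cball x 1" g x] by (simp add: interior_cball)
  then have "continuous_on UNIV g"
    by (simp add: continuous_at_imp_continuous_on)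
  with \<open>strict_mono k\<close> ul show thesis
    using that by blast
qed

lemma norm_le_of_weighted_le:
  assumes "0 \<le> \<beta>" and "(1 + \<bar>x\<bar>) powr \<beta> * cmod z \<le> C"
  shows "cmod z \<le> C"
proof -
  have "1 \<le> (1 + \<bar>x\<bar>) powr \<beta>"
    using \<open>0 \<le> \<beta>\<close> by (intro ge_one_powr_ge_zero) auto
  then have "cmod z \<le> (1 + \<bar>x\<bar>) powr \<beta> * cmod z"
    by (simp add: mult_le_cancel_right1)
  with assms(2) show ?thesis
    by linarith
qed

lemma Cw_convergent_subseq:
  fixes h :: "nat \<Rightarrow> real \<Rightarrow> complex"
  assumes "0 \<le> \<alpha>" "\<alpha> < \<beta>"
    and decay: "\<And>n x. (1 + \<bar>x\<bar>) powr \<beta> * cmod (h n x) \<le> C"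
    and equicont: "\<And>x e. 0 < e \<Longrightarrow> \<exists>d>0. \<forall>n y. \<bar>x - y\<bar> < d \<longrightarrow> cmod (h n x - h n y) < e"
  obtains k g where "strict_mono k" "g \<in> Cw \<alpha>"
    "(\<lambda>n. wnorm \<alpha> (\<lambda>x. h (k n) x - g x)) \<longlonglongrightarrow> 0"
proof -
  have "cmod (h n x) \<le> C" for n x
    using \<open>0 \<le> \<alpha>\<close> \<open>\<alpha> < \<beta>\<close> decay by (intro norm_le_of_weighted_le[of \<beta> x]) auto
  then have bounded: "\<exists>B. \<forall>n. \<forall>x\<in>S. norm (h n x) \<le> B" for S :: "real set"
    by blast
  have equicont_norm: "\<exists>d>0. \<forall>n y. norm (x - y) < d \<longrightarrow> norm (h n x - h n y) < e" if "0 < e" for x e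
    using equicont[OF that, of x] by (simp add: real_norm_def)
  obtain k g where "strict_mono k" "continuous_on UNIV g"
    and lim: "\<And>S. compact S \<Longrightarrow> uniform_limit S (\<lambda>n. h (k n)) g sequentially"
    using Arzela_Ascoli_locally_uniform[of h] bounded equicont_norm by blast
  have g_decay: "(1 + \<bar>x\<bar>) powr \<beta> * cmod (g x) \<le> C" for x
  proof (rule tendsto_upperbound)
    show "(\<lambda>n. (1 + \<bar>x\<bar>) powr \<beta> * cmod (h (k n) x)) \<longlonglongrightarrow> (1 + \<bar>x\<bar>) powr \<beta> * cmod (g x)"
      using tendsto_uniform_limitI[OF lim[of "{x}"]] by (intro tendsto_intros) auto
  qed (simp_all add: decay)
  with \<open>continuous_on UNIV g\<close> have "g \<in> Cw \<beta>"
    by (rule CwI)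
  then have "g \<in> Cw \<alpha>"
    using Cw_antimono[of \<alpha> \<beta>] \<open>\<alpha> < \<beta>\<close> by auto
  moreover have "(\<lambda>n. wnorm \<alpha> (\<lambda>x. h (k n) x - g x)) \<longlonglongrightarrow> 0"
    using \<open>0 \<le> \<alpha>\<close> \<open>\<alpha> < \<beta>\<close> decay g_decay lim[OF compact_Icc]
    by (intro wnorm_diff_tendsto_zero) auto
  ultimately show thesis
    using that \<open>strict_mono k\<close> by blast
qed

theorem proposition1:
  fixes \<alpha> \<beta> :: real
    and A :: "(real \<Rightarrow> complex) \<Rightarrow> (real \<Rightarrow> complex)"
  assumes "0 < \<alpha>" and "\<alpha> < \<beta>"
    and "bounded_linear_op \<alpha> \<beta> A"
    and equicont: "\<And>X r. X > 0 \<Longrightarrow> r > 0 \<Longrightarrow>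
         \<forall>\<epsilon>>0. \<exists>\<delta>>0. \<forall>f\<in>{f\<in>Cw \<alpha>. wnorm \<alpha> f < r}. \<forall>x\<in>{-X..X}. \<forall>y\<in>{-X..X}.
            \<bar>x - y\<bar> < \<delta> \<longrightarrow> cmod (A f x - A f y) < \<epsilon>"
  shows "compact_op \<alpha> A"
  unfolding compact_op_def
proof (intro allI impI, elim conjE)
  fix fs :: "nat \<Rightarrow> real \<Rightarrow> complex"
  assume fs: "\<forall>n. fs n \<in> Cw \<alpha>" and "bdd_above (range (\<lambda>n. wnorm \<alpha> (fs n)))"
  then obtain M where M: "\<And>n. wnorm \<alpha> (fs n) \<le> M"
    by (auto simp: bdd_above_def)
  obtain K where "0 \<le> K"
    and K: "\<And>f x. f \<in> Cw \<alpha> \<Longrightarrow> (1 + \<bar>x\<bar>) powr \<beta> * cmod (A f x) \<le> K * wnorm \<alpha> f"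
    using bounded_linear_op_weighted_bound[OF \<open>bounded_linear_op \<alpha> \<beta> A\<close>] by blast
  have decay: "(1 + \<bar>x\<bar>) powr \<beta> * cmod (A (fs n) x) \<le> K * M" for n x
    using order_trans[OF K[of "fs n" x] mult_left_mono[OF M \<open>0 \<le> K\<close>]] fs by simp
  have fs_ball: "fs n \<in> {f\<in>Cw \<alpha>. wnorm \<alpha> f < \<bar>M\<bar> + 1}" for n
    using fs M[of n] by auto
  have equicont_at: "\<exists>d>0. \<forall>n y. \<bar>x - y\<bar> < d \<longrightarrow> cmod (A (fs n) x - A (fs n) y) < e"
    if "0 < e" for x e
  proof -
    have "0 < \<bar>M\<bar> + 1"
      by simp
    from equicontinuous_at_if_equicontinuous_on_intervals[OF equicont[OF _ this] that]
    obtain d where "d > 0" and "\<forall>f\<in>{f\<in>Cw \<alpha>. wnorm \<alpha> f < \<bar>M\<bar> + 1}.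
        \<forall>y. \<bar>x - y\<bar> < d \<longrightarrow> cmod (A f x - A f y) < e"
      by blast
    with fs_ball show ?thesis
      by blast
  qed
  obtain k g where "strict_mono k" "g \<in> Cw \<alpha>"
    "(\<lambda>n. wnorm \<alpha> (\<lambda>x. A (fs (k n)) x - g x)) \<longlonglongrightarrow> 0"
    using Cw_convergent_subseq[OF less_imp_le[OF \<open>0 < \<alpha>\<close>] \<open>\<alpha> < \<beta>\<close> decay equicont_at] by blast
  then show "\<exists>r g. strict_mono r \<and> g \<in> Cw \<alpha> \<and> (\<lambda>n. wnorm \<alpha> (\<lambda>x. A (fs (r n)) x - g x)) \<longlonglongrightarrow> 0"
    by blast
qed

end
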